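(* Let $X=\{0,1\}^{\mathbb{Z}}$. Then the topological full group $\llbracket X\rrbracket$ is a subgroup of the Brin–Thompson group $2V$.
   Context: For a subshift $X\subseteq\Sigma^{\mathbb{Z}}$ with shift map $\sigma(x)_i=x_{i+1}$, the topological full group $\llbracket X\rrbracket$ is the group of all homeomorphisms $f:X\to X$ for which there is a continuous function $c:X\to\mathbb{Z}$ (the cocycle of $f$) with $f(x)=\sigma^{c(x)}(x)$ for all $x\in X$. Configurations of $\{0,1\}^{\mathbb{Z}}$ are written $x.y$ with $x\in\{0,1\}^{(-\infty,-1]}$, $y\in\{0,1\}^{\mathbb{N}}$, the coordinate right after the point being coordinate $0$. The Brin–Thompson group $2V$ is (here) the group of all homeomorphisms $f:\{0,1\}^{\mathbb{Z}}\to\{0,1\}^{\mathbb{Z}}$ for which there exist $n\in\mathbb{N}$ and a map assigning to each pair $(u,v)$ with $u\in\{0,1\}^n$, $v\in\{0,1\}^{n+1}$ a pair of finite words $(u',v')$, such that $f(xu.vy)=xu'.v'y$ for all left-infinite $x$ and right-infinite $y$. *)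

theory Defs
  imports "HOL-Analysis.Analysis"
begin

text \<open>Configurations of the full shift X = {0,1}^Z, with 0/1 encoded as False/True,
  carrying the product of discrete topologies (the Cantor topology).\<close>

type_synonym config = "int \<Rightarrow> bool"

definition cantor_top :: "config topology" where
  "cantor_top = product_topology (\<lambda>_. discrete_topology (UNIV :: bool set)) UNIV"

text \<open>Shift map: sigma(x)_i = x_(i+1); hence (sigma^k x)_i = x_(i+k) for all k in Z.\<close>

definition shift :: "int \<Rightarrow> config \<Rightarrow> config" where
  "shift k x = (\<lambda>i. x (i + k))"

definition topological_full_group :: "(config \<Rightarrow> config) set" where
  "topological_full_group =
     {f. homeomorphic_map cantor_top cantor_top f \<and>
         (\<exists>c :: config \<Rightarrow> int.
            continuous_map cantor_top (discrete_topology UNIV) c \<and>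
            (\<forall>x. f x = shift (c x) x))}"

text \<open>The configuration  x u . v y : a left-infinite word x (with x k the symbol at
  distance k+1 to the left of the beginning of u), finite words u, v, and a
  right-infinite word y; the first letter of v sits at coordinate 0.\<close>

definition cat_conf :: "(nat \<Rightarrow> bool) \<Rightarrow> bool list \<Rightarrow> bool list \<Rightarrow> (nat \<Rightarrow> bool) \<Rightarrow> config" where
  "cat_conf x u v y = (\<lambda>i.
     if 0 \<le> i then
       (if nat i < length v then v ! nat i else y (nat i - length v))
     else
       (let k = nat (- i - 1) in
         if k < length u then u ! (length u - 1 - k) else x (k - length u)))"

definition brin_thompson_2V :: "(config \<Rightarrow> config) set" where
  "brin_thompson_2V =
     {f. homeomorphic_map cantor_top cantor_top f \<and>
         (\<exists>(n::nat) (g :: bool list \<Rightarrow> bool list \<Rightarrow> bool list \<times> bool list).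
            \<forall>x u v y. length u = n \<longrightarrow> length v = n + 1 \<longrightarrow>
              f (cat_conf x u v y) = cat_conf x (fst (g u v)) (snd (g u v)) y)}"

end

theory Submission
  imports Defs
begin

text \<open>A continuous cocycle c takes values in the discrete space \<open>\<int>\<close>, so by compactness of the
  Cantor space it is bounded, say by M, and is determined by the window of coordinates
  \<open>[-N, N]\<close>.  For n \<ge> N + M the local rule of 2V reads c off the window \<open>u . v\<close>, and
  shifting by c only moves the point inside \<open>u v\<close>, which is the required rewriting of
  \<open>x u . v y\<close> into \<open>x u' . v' y\<close>.\<close>

definition cylinder :: "nat \<Rightarrow> config \<Rightarrow> config set" where
  "cylinder N z = {w. \<forall>i. \<bar>i\<bar> \<le> int N \<longrightarrow> w i = z i}"

definition determined_at :: "nat \<Rightarrow> (config \<Rightarrow> 'a) \<Rightarrow> config \<Rightarrow> bool" where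
  "determined_at N c z \<longleftrightarrow> (\<forall>w \<in> cylinder N z. c w = c z)"

lemma topspace_cantor_top [simp]: "topspace cantor_top = UNIV"
  unfolding cantor_top_def by simp

lemma compact_space_cantor_top: "compact_space cantor_top"
  unfolding cantor_top_def compact_space_product_topology
  by (simp add: compact_space_discrete_topology)

lemma self_in_cylinder: "z \<in> cylinder N z"
  by (simp add: cylinder_def)

lemma cylinder_antimono: "N \<le> M \<Longrightarrow> cylinder M z \<subseteq> cylinder N z"
  by (auto simp: cylinder_def)

lemma cylinder_eq_of_mem: "w \<in> cylinder N z \<Longrightarrow> cylinder N w = cylinder N z"
  by (auto simp: cylinder_def)

lemma cylinder_eq_PiE:
  "cylinder N z = (\<Pi>\<^sub>E i\<in>UNIV. if \<bar>i\<bar> \<le> int N then {z i} else UNIV)"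
  by (auto simp: cylinder_def PiE_iff split: if_splits)

lemma openin_cylinder: "openin cantor_top (cylinder N z)"
proof -
  have "finite {i. \<bar>i\<bar> \<le> int N}"
    by (rule finite_subset[of _ "{- int N..int N}"]) auto
  then show ?thesis
    unfolding cantor_top_def cylinder_eq_PiE openin_PiE_gen
    by (auto elim: rev_finite_subset split: if_splits)
qed

lemma openin_contains_cylinder:
  assumes "openin cantor_top U" "z \<in> U"
  obtains N where "cylinder N z \<subseteq> U"
proof -
  obtain V where V: "finite {i \<in> UNIV. V i \<noteq> topspace (discrete_topology UNIV)}"
      "z \<in> Pi\<^sub>E UNIV V" "Pi\<^sub>E UNIV V \<subseteq> U"
    using assms unfolding cantor_top_def openin_product_topology_alt by blast
  define F where "F = {i. V i \<noteq> UNIV}"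
  have "finite F" using V(1) by (simp add: F_def)
  define N where "N = Max (insert 0 ((\<lambda>i. nat \<bar>i\<bar>) ` F))"
  have F_window: "\<bar>i\<bar> \<le> int N" if "i \<in> F" for i
  proof -
    have "nat \<bar>i\<bar> \<le> N" unfolding N_def using \<open>finite F\<close> that by (intro Max_ge) auto
    then show ?thesis by linarith
  qed
  have "w i \<in> V i" if "w \<in> cylinder N z" for w i
    using that V(2) F_window by (cases "i \<in> F") (auto simp: cylinder_def F_def)
  then have "cylinder N z \<subseteq> Pi\<^sub>E UNIV V"
    by (auto simp: PiE_UNIV_domain)
  with V(3) show ?thesis using that by (meson order_trans)
qed

lemma determined_at_mono: "determined_at N c z \<Longrightarrow> N \<le> M \<Longrightarrow> determined_at M c z"
  unfolding determined_at_def using cylinder_antimono by blast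

text \<open>No continuity is needed: every point of the cylinder around z has the same cylinder.\<close>

lemma openin_determined_at: "openin cantor_top {z. determined_at N c z}"
proof (rule openin_subopen[THEN iffD2], intro ballI exI conjI)
  fix z assume z: "z \<in> {z. determined_at N c z}"
  show "openin cantor_top (cylinder N z)" "z \<in> cylinder N z"
    by (rule openin_cylinder, rule self_in_cylinder)
  show "cylinder N z \<subseteq> {z. determined_at N c z}"
    using z by (auto simp: determined_at_def cylinder_eq_of_mem)
qed

lemma continuous_map_discrete_determined_at:
  assumes "continuous_map cantor_top (discrete_topology UNIV) c"
  obtains N where "determined_at N c z"
proof -
  have "openin cantor_top {w. c w = c z}"
    using openin_continuous_map_preimage[OF assms, of "{c z}"] by simp
  then obtain N where "cylinder N z \<subseteq> {w. c w = c z}"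
    using openin_contains_cylinder by blast
  then show ?thesis using that by (auto simp: determined_at_def)
qed

lemma continuous_map_discrete_uniformly_determined:
  assumes "continuous_map cantor_top (discrete_topology UNIV) c"
  obtains N where "\<And>z. determined_at N c z"
proof -
  define A where "A N = {z. determined_at N c z}" for N
  have "\<forall>U \<in> range A. openin cantor_top U"
    using openin_determined_at by (auto simp: A_def)
  moreover have "topspace cantor_top \<subseteq> \<Union>(range A)"
  proof
    fix z
    obtain N where "determined_at N c z"
      using continuous_map_discrete_determined_at[OF assms] .
    then show "z \<in> \<Union>(range A)" by (auto simp: A_def)
  qed
  ultimately have "\<exists>\<F>. finite \<F> \<and> \<F> \<subseteq> range A \<and> topspace cantor_top \<subseteq> \<Union>\<F>"
    using compact_space_cantor_top unfolding compact_space_alt by simp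
  then obtain \<F> where \<F>: "finite \<F>" "\<F> \<subseteq> range A" "topspace cantor_top \<subseteq> \<Union>\<F>"
    by blast
  then obtain S where S: "finite S" "\<F> = A ` S"
    by (meson finite_subset_image)
  have "determined_at (Max (insert 0 S)) c z" for z
  proof -
    obtain n where n: "n \<in> S" "determined_at n c z"
      using \<F>(3) S(2) by (auto simp: A_def)
    then have "n \<le> Max (insert 0 S)"
      using S(1) by simp
    with n(2) show ?thesis
      by (rule determined_at_mono)
  qed
  then show ?thesis
    by (rule that)
qed

text \<open>Such a map factors through the restriction to the finite window \<open>[-N, N]\<close>.\<close>

lemma uniformly_determined_finite_range:
  assumes "\<And>z. determined_at N c z"
  shows "finite (range c)"
proof -
  define r where "r w = (\<lambda>i. i \<in> {i \<in> {- int N..int N}. w i})" for w :: config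
  have "w \<in> cylinder N (r w)" for w
    by (auto simp: cylinder_def r_def)
  then have "range c \<subseteq> c ` range r"
    using assms by (auto simp: determined_at_def)
  moreover have "r w \<in> (\<lambda>A i. i \<in> A) ` Pow {- int N..int N}" for w
    unfolding r_def by (rule imageI) auto
  then have "range r \<subseteq> (\<lambda>A i. i \<in> A) ` Pow {- int N..int N}"
    by blast
  then have "finite (range r)"
    by (rule finite_subset) simp
  ultimately show ?thesis
    using finite_surj by blast
qed

lemma finite_range_int_bounded:
  fixes c :: "'a \<Rightarrow> int"
  assumes "finite (range c)"
  obtains M :: nat where "\<And>w. \<bar>c w\<bar> \<le> int M"
proof -
  have bound: "\<bar>c w\<bar> \<le> Max (abs ` range c)" for w
    using assms by (intro Max_ge) auto
  then have "0 \<le> Max (abs ` range c)"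
    using abs_ge_zero[of "c undefined"] bound[of undefined] by linarith
  then have "\<bar>c w\<bar> \<le> int (nat (Max (abs ` range c)))" for w
    using bound[of w] by simp
  then show ?thesis
    by (rule that)
qed

lemma cat_conf_eq_append:
  "cat_conf x u v y i =
    (let p = i + int (length u) in
     if p < 0 then x (nat (- p - 1))
     else if p < int (length (u @ v)) then (u @ v) ! nat p
     else y (nat p - length (u @ v)))"
proof (cases "0 \<le> i")
  case True
  then show ?thesis
    by (auto simp: cat_conf_def Let_def nth_append nat_add_distrib)
next
  case False
  define k where "k = nat (- i - 1)"
  have k: "i = - int k - 1" "nat (- i - 1) = k"
    using False by (simp_all add: k_def)
  show ?thesis
  proof (cases "k < length u")
    case True
    then have "nat (i + int (length u)) = length u - 1 - k"
      using k by simp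
    then show ?thesis
      using True False k by (auto simp: cat_conf_def Let_def nth_append)
  next
    case outside: False
    then have "nat (- (i + int (length u)) - 1) = k - length u"
      using k by simp
    then show ?thesis
      using outside False k by (auto simp: cat_conf_def Let_def nth_append)
  qed
qed

lemma shift_cat_conf:
  assumes "0 \<le> int (length u) + k" "int (length u) + k \<le> int (length (u @ v))"
  defines "j \<equiv> nat (int (length u) + k)"
  shows "shift k (cat_conf x u v y) = cat_conf x (take j (u @ v)) (drop j (u @ v)) y"
proof
  fix i
  have j: "int j = int (length u) + k" "length (take j (u @ v)) = j"
    using assms by (auto simp: j_def)
  show "shift k (cat_conf x u v y) i = cat_conf x (take j (u @ v)) (drop j (u @ v)) y i"
    unfolding shift_def cat_conf_eq_append[of x u] cat_conf_eq_append[of x "take j (u @ v)"]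
      j(2) append_take_drop_id
    using j(1) by (simp add: algebra_simps)
qed

lemma cat_conf_in_cylinder:
  assumes "length u = n" "length v = n + 1"
  shows "cat_conf x' u v y' \<in> cylinder n (cat_conf x u v y)"
  using assms unfolding cylinder_def cat_conf_eq_append[of x] cat_conf_eq_append[of x']
  by (auto simp: Let_def)

lemma shift_by_local_cocycle:
  assumes det: "\<And>z. determined_at N c z" and bound: "\<And>w. \<bar>c w\<bar> \<le> int M"
    and u: "length u = N + M" and v: "length v = N + M + 1"
  defines "j \<equiv> nat (int (length u) + c (cat_conf (\<lambda>_. False) u v (\<lambda>_. False)))"
  shows "shift (c (cat_conf x u v y)) (cat_conf x u v y) =
    cat_conf x (take j (u @ v)) (drop j (u @ v)) y"
proof -
  let ?z = "cat_conf (\<lambda>_. False) u v (\<lambda>_. False)"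
  have "cat_conf x u v y \<in> cylinder N ?z"
    using cat_conf_in_cylinder[OF u v, of x y "\<lambda>_. False" "\<lambda>_. False"]
      cylinder_antimono[of N "N + M"] by auto
  then have "c (cat_conf x u v y) = c ?z"
    using det by (simp add: determined_at_def)
  moreover have "0 \<le> int (length u) + c ?z" "int (length u) + c ?z \<le> int (length (u @ v))"
    using bound[of ?z] u v by auto
  ultimately show ?thesis
    unfolding j_def by (simp add: shift_cat_conf)
qed

theorem mainTheorem1:
  shows "topological_full_group \<subseteq> brin_thompson_2V"
proof
  fix f assume "f \<in> topological_full_group"
  then obtain c where hom: "homeomorphic_map cantor_top cantor_top f"
    and cont: "continuous_map cantor_top (discrete_topology UNIV) c"
    and f: "\<And>x. f x = shift (c x) x"
    unfolding topological_full_group_def by blast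
  obtain N where det: "\<And>z. determined_at N c z"
    using continuous_map_discrete_uniformly_determined[OF cont] by blast
  obtain M where bound: "\<And>w. \<bar>c w\<bar> \<le> int M"
    using finite_range_int_bounded[OF uniformly_determined_finite_range[OF det]] by blast
  define g where "g u v = (let j = nat (int (length u) + c (cat_conf (\<lambda>_. False) u v (\<lambda>_. False)))
    in (take j (u @ v), drop j (u @ v)))" for u v :: "bool list"
  have "\<forall>x u v y. length u = N + M \<longrightarrow> length v = N + M + 1 \<longrightarrow>
      f (cat_conf x u v y) = cat_conf x (fst (g u v)) (snd (g u v)) y"
    using shift_by_local_cocycle[OF det bound] by (simp add: f g_def Let_def)
  then show "f \<in> brin_thompson_2V"
    unfolding brin_thompson_2V_def using hom by blast
qed

end
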